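(* Let $\varphi\in C^\infty_c(\mathbb R)$ satisfy $$\sum_{k=1}^\infty\frac{\|D^k\varphi\|_{L^2(\mathbb R)}^2}{k^2}<+\infty.$$ Then $\varphi\equiv0$. Consequently, with $N=1$, $\sigma_s$ the normalized surface measure on $\mathbb S^0$, and $\mu^+=\sum_{k=1}^\infty\delta_k/k^2$, for every open set $\Omega\subset\mathbb R$ the space $\mathcal X(\Omega)$ equals $\{0\}$.
   Context: $D^k$ is the $k$-th derivative and $\delta_k$ the Dirac mass at $k$. In the setting of the consequence, for $s=k\in\mathbb N$ the energy $\mathcal E_{2s_1,s}(u,u)$ (with $s_1=k+1$) equals $\|D^ku\|^2_{L^2(\mathbb R)}$, so that for this $\mu^+$, $\mathcal X(\Omega)$ is the closure of $\{u\in C^\infty_c(\Omega):\sum_{k\ge1}\|D^ku\|^2_{L^2}/k^2<\infty\}$ in the norm $(\|u\|^2_{L^2}+\sum_{k\ge1}\|D^ku\|^2_{L^2}/k^2)^{1/2}$. *)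

theory Defs
  imports "HOL-Analysis.Analysis"
begin

definition test_fun :: "real set \<Rightarrow> (real \<Rightarrow> real) \<Rightarrow> bool" where
  "test_fun \<Omega> u \<longleftrightarrow>
     (\<forall>k x. (deriv ^^ k) u differentiable (at x)) \<and>
     compact (closure {x. u x \<noteq> 0}) \<and> closure {x. u x \<noteq> 0} \<subseteq> \<Omega>"

definition L2sq :: "(real \<Rightarrow> real) \<Rightarrow> real" where
  "L2sq u = integral\<^sup>L lborel (\<lambda>x. (u x)\<^sup>2)"

definition energy_finite :: "(real \<Rightarrow> real) \<Rightarrow> bool" where
  "energy_finite u \<longleftrightarrow> summable (\<lambda>k. L2sq ((deriv ^^ Suc k) u) / (real (Suc k))\<^sup>2)"

text \<open>The dense subspace whose closure is X(Omega).\<close>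
definition Xpre :: "real set \<Rightarrow> (real \<Rightarrow> real) set" where
  "Xpre \<Omega> = {u. test_fun \<Omega> u \<and> energy_finite u}"

end

theory Submission
  imports Defs
begin

text \<open>
  Let \<open>\<phi>\<close> vanish outside \<open>[-R, R]\<close>. Writing \<open>D\<^sup>k \<phi>(x)\<close> as the integral of \<open>D\<^sup>k\<^sup>+\<^sup>1 \<phi>\<close> and
  using \<open>|t| \<le> (1 + t\<^sup>2)/2\<close> gives \<open>sup |D\<^sup>k \<phi>| \<le> R + 1 + \<parallel>D\<^sup>k\<^sup>+\<^sup>1 \<phi>\<parallel>\<^sup>2/2\<close>; finiteness of the
  energy series makes \<open>\<parallel>D\<^sup>k\<^sup>+\<^sup>1 \<phi>\<parallel>\<^sup>2 = O(k\<^sup>2)\<close>, so all derivatives are bounded by \<open>M (k+1)\<^sup>2\<close>.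
  Such polynomial growth forces the Taylor remainder around a point outside the support,
  where all Taylor coefficients vanish, to tend to zero; hence \<open>\<phi> = 0\<close>.
\<close>

lemma abs_le_one_plus_square_half:
  fixes t :: real
  shows "\<bar>t\<bar> \<le> (1 + t\<^sup>2) / 2"
proof -
  have "0 \<le> (\<bar>t\<bar> - 1)\<^sup>2" by simp
  then show ?thesis by (simp add: power2_eq_square algebra_simps)
qed

lemma L2sq_has_integral_interval:
  fixes h :: "real \<Rightarrow> real"
  assumes cont: "continuous_on UNIV h" and vanish: "\<And>x. \<bar>x\<bar> > R \<Longrightarrow> h x = 0"
  shows "((\<lambda>x. (h x)\<^sup>2) has_integral L2sq h) {-R..R}"
proof -
  have "isCont (\<lambda>x. (h x)\<^sup>2) x" for x
    using cont by (intro continuous_intros) (simp add: continuous_on_eq_continuous_at)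
  moreover have "(\<lambda>x. (h x)\<^sup>2 * indicator {-R..R} x) = (\<lambda>x. (h x)\<^sup>2)"
  proof
    show "(h x)\<^sup>2 * indicator {-R..R} x = (h x)\<^sup>2" for x
      using vanish[of x] by (cases "x \<in> {-R..R}") (auto simp: abs_if)
  qed
  ultimately have "integrable lborel (\<lambda>x. (h x)\<^sup>2)"
    using borel_integrable_atLeastAtMost[of "-R" R "\<lambda>x. (h x)\<^sup>2"] by simp
  then have "((\<lambda>x. (h x)\<^sup>2) has_integral L2sq h) UNIV"
    unfolding L2sq_def by (rule has_integral_integral_real)
  moreover have "(\<lambda>x. (h x)\<^sup>2) = (\<lambda>x. if x \<in> {-R..R} then (h x)\<^sup>2 else 0)"
    using vanish by (force simp: fun_eq_iff abs_if)
  ultimately show ?thesis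
    using has_integral_restrict_UNIV[of "{-R..R}" "\<lambda>x. (h x)\<^sup>2"] by simp
qed

lemma abs_le_L2sq_derivative:
  fixes g g' :: "real \<Rightarrow> real"
  assumes "R \<ge> 0" and deriv: "\<And>x. (g has_real_derivative g' x) (at x)"
    and cont: "continuous_on UNIV g'"
    and vanish: "\<And>x. \<bar>x\<bar> > R \<Longrightarrow> g x = 0" and vanish': "\<And>x. \<bar>x\<bar> > R \<Longrightarrow> g' x = 0"
  shows "\<bar>g x\<bar> \<le> R + 1 + L2sq g' / 2"
proof -
  let ?h = "\<lambda>t. (1 + (g' t)\<^sup>2) / 2"
  have int_g': "g' integrable_on {a..b}" and int_h: "?h integrable_on {a..b}" for a b
    using cont by (auto intro!: integrable_continuous_interval continuous_intros
                        intro: continuous_on_subset)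
  have L2: "((\<lambda>t. (g' t)\<^sup>2) has_integral L2sq g') {-R-1..R+1}"
    using L2sq_has_integral_interval[OF cont, of "R+1"] vanish' by simp
  have "(?h has_integral (2*R + 2 + L2sq g') / 2) {-R-1..R+1}"
    using has_integral_divide[OF has_integral_add[OF has_integral_const_real[of 1 "-R-1" "R+1"] L2], of 2]
      \<open>R \<ge> 0\<close> by simp
  then have int_h_total: "integral {-R-1..R+1} ?h = R + 1 + L2sq g' / 2"
    by (auto dest: integral_unique)
  show ?thesis
  proof (cases "\<bar>x\<bar> > R")
    case True
    moreover have "L2sq g' \<ge> 0" using has_integral_nonneg[OF L2] by simp
    ultimately show ?thesis using vanish \<open>R \<ge> 0\<close> by simp
  next
    case False
    have "(g' has_integral (g x - g (-R-1))) {-R-1..x}"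
      using False deriv
      by (intro fundamental_theorem_of_calculus)
         (auto simp: has_real_derivative_iff_has_vector_derivative intro: has_vector_derivative_at_within)
    then have "\<bar>g x\<bar> = \<bar>integral {-R-1..x} g'\<bar>"
      using vanish[of "-R-1"] \<open>R \<ge> 0\<close> by (simp add: integral_unique)
    also have "\<dots> \<le> integral {-R-1..x} ?h"
      using integral_norm_bound_integral[OF int_g' int_h] abs_le_one_plus_square_half by simp
    also have "\<dots> \<le> integral {-R-1..R+1} ?h"
      using False by (intro integral_subset_le int_h) (auto simp: add_nonneg_nonneg)
    finally show ?thesis using int_h_total by simp
  qed
qed

lemma Suc_square_le_four_mult_power2: "(real n + 1)\<^sup>2 \<le> 4 * 2 ^ n"
proof (induction n)
  case (Suc n)
  show ?case
  proof (cases "n < 2")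
    case True
    then have "n = 0 \<or> n = 1" by auto
    then show ?thesis by (auto simp: power2_eq_square)
  next
    case False
    then have "2 * 2 \<le> real n * real n"
      using mult_mono[of 2 "real n" 2 "real n"] by simp
    then have "(real (Suc n) + 1)\<^sup>2 \<le> 2 * (real n + 1)\<^sup>2"
      by (simp add: power2_eq_square algebra_simps)
    then show ?thesis using Suc by simp
  qed
qed simp

lemma quadratic_taylor_bound_tendsto_zero:
  fixes M d :: real
  assumes "M \<ge> 0" "d \<ge> 0"
  shows "(\<lambda>n. M * (real n + 1)\<^sup>2 * d ^ n / fact n) \<longlonglongrightarrow> 0"
proof (rule Lim_null_comparison)
  have "(\<lambda>n. inverse (fact n) * (2*d) ^ n) \<longlonglongrightarrow> 0"
    by (rule summable_LIMSEQ_zero[OF summable_exp])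
  then show "(\<lambda>n. 4 * M * (inverse (fact n) * (2*d) ^ n)) \<longlonglongrightarrow> 0"
    using tendsto_mult_right_zero by blast
  have "M * (real n + 1)\<^sup>2 * d ^ n / fact n \<le> 4 * M * (inverse (fact n) * (2*d) ^ n)" for n
  proof -
    have "M * (real n + 1)\<^sup>2 * d ^ n / fact n \<le> M * (4 * 2^n) * d ^ n / fact n"
      using assms Suc_square_le_four_mult_power2[of n]
      by (intro divide_right_mono mult_right_mono mult_left_mono) auto
    then show ?thesis by (simp add: power_mult_distrib field_simps)
  qed
  then show "\<forall>\<^sub>F n in sequentially.
      norm (M * (real n + 1)\<^sup>2 * d ^ n / fact n) \<le> 4 * M * (inverse (fact n) * (2*d) ^ n)"
    using assms by (intro always_eventually) simp
qed

lemma zero_if_derivatives_quadratically_bounded_and_flat_at: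
  fixes D :: "nat \<Rightarrow> real \<Rightarrow> real"
  assumes deriv: "\<And>k x. (D k has_real_derivative D (Suc k) x) (at x)"
    and bound: "\<And>k x. \<bar>D k x\<bar> \<le> M * (real k + 1)\<^sup>2"
    and flat: "\<And>k. D k c = 0"
  shows "D 0 x = 0"
proof (cases "x = c")
  case False
  have "M \<ge> 0" using bound[of 0 x] abs_ge_zero[of "D 0 x"] by simp
  have "\<bar>D 0 x\<bar> \<le> M * (real n + 1)\<^sup>2 * \<bar>x - c\<bar> ^ n / fact n" if "n > 0" for n
  proof -
    obtain t where "D 0 x = (\<Sum>m<n. D m c / fact m * (x - c)^m) + D n t / fact n * (x - c)^n"
      using Taylor[of n D "D 0" "min x c" "max x c" c x] \<open>n > 0\<close> False deriv by auto
    then have "\<bar>D 0 x\<bar> = \<bar>D n t\<bar> * \<bar>x - c\<bar> ^ n / fact n"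
      by (simp add: flat abs_mult power_abs)
    also have "\<dots> \<le> M * (real n + 1)\<^sup>2 * \<bar>x - c\<bar> ^ n / fact n"
      by (intro divide_right_mono mult_right_mono bound) auto
    finally show ?thesis .
  qed
  then have "\<bar>D 0 x\<bar> \<le> 0"
    by (intro LIMSEQ_le_const[OF quadratic_taylor_bound_tendsto_zero[OF \<open>M \<ge> 0\<close>, of "\<bar>x - c\<bar>"]])
       (auto intro: exI[of _ 1])
  then show ?thesis by simp
qed (simp add: flat)

lemma higher_deriv_has_real_derivative:
  assumes "\<And>k x. (deriv ^^ k) u differentiable (at x)"
  shows "((deriv ^^ k) u has_real_derivative (deriv ^^ Suc k) u x) (at x)"
  using assms[of k x] by (simp add: DERIV_deriv_iff_real_differentiable)

lemma higher_deriv_vanishes_outside: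
  fixes u :: "real \<Rightarrow> real"
  assumes smooth: "\<And>k x. (deriv ^^ k) u differentiable (at x)"
    and vanish: "\<And>x. \<bar>x\<bar> > R \<Longrightarrow> u x = 0" and "\<bar>x\<bar> > R"
  shows "(deriv ^^ k) u x = 0"
  using \<open>\<bar>x\<bar> > R\<close>
proof (induction k arbitrary: x)
  case 0
  then show ?case using vanish by simp
next
  case (Suc k)
  have "((deriv ^^ k) u has_real_derivative 0) (at x)"
  proof (rule has_field_derivative_transform_within_open)
    show "((\<lambda>_. 0) has_real_derivative 0) (at x)" by simp
    show "open {x::real. R < \<bar>x\<bar>}"
      by (intro open_Collect_less continuous_intros)
  qed (use Suc in auto)
  then show ?case
    using higher_deriv_has_real_derivative[OF smooth, of k x] DERIV_unique by blast
qed

lemma test_fun_vanishes_outside: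
  assumes "test_fun \<Omega> u"
  obtains R where "R \<ge> 0" "\<And>x. \<bar>x\<bar> > R \<Longrightarrow> u x = 0"
proof -
  have "bounded (closure {x. u x \<noteq> 0})"
    using assms unfolding test_fun_def by (simp add: compact_imp_bounded)
  then obtain a where "\<forall>x\<in>closure {x. u x \<noteq> 0}. \<bar>x\<bar> \<le> a"
    unfolding bounded_real by blast
  then have "u x = 0" if "\<bar>x\<bar> > \<bar>a\<bar>" for x
    using that closure_subset[of "{x. u x \<noteq> 0}"] by force
  then show ?thesis using that[of "\<bar>a\<bar>"] by simp
qed

lemma energy_finite_imp_L2sq_quadratic_bound:
  assumes "energy_finite u"
  obtains B where "B \<ge> 0" "\<And>k. L2sq ((deriv ^^ Suc k) u) \<le> B * (real k + 1)\<^sup>2"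
proof -
  obtain B where "B > 0" and B: "\<And>k. \<bar>L2sq ((deriv ^^ Suc k) u) / (real (Suc k))\<^sup>2\<bar> \<le> B"
    using summable_imp_Bseq[OF assms[unfolded energy_finite_def]] by (auto elim!: BseqE)
  show ?thesis
  proof (rule that)
    show "L2sq ((deriv ^^ Suc k) u) \<le> B * (real k + 1)\<^sup>2" for k
      using B[of k] by (simp add: add.commute divide_le_eq)
  qed (use \<open>B > 0\<close> in simp)
qed

lemma test_fun_energy_finite_eq_zero:
  assumes "test_fun \<Omega> \<phi>" and "energy_finite \<phi>"
  shows "\<phi> = (\<lambda>_. 0)"
proof
  fix x
  let ?D = "\<lambda>k. (deriv ^^ k) \<phi>"
  have smooth: "\<And>k x. ?D k differentiable (at x)"
    using assms(1) by (simp add: test_fun_def)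
  note deriv = higher_deriv_has_real_derivative[OF smooth]
  have cont: "continuous_on UNIV (?D k)" for k
    by (intro continuous_at_imp_continuous_on ballI DERIV_isCont[OF deriv])
  obtain R where "R \<ge> 0" and vanish: "\<And>x. \<bar>x\<bar> > R \<Longrightarrow> \<phi> x = 0"
    using test_fun_vanishes_outside[OF assms(1)] by blast
  have vanish_D: "?D k y = 0" if "\<bar>y\<bar> > R" for k y
    using higher_deriv_vanishes_outside[OF smooth vanish that] .
  obtain B where "B \<ge> 0" and B: "\<And>k. L2sq (?D (Suc k)) \<le> B * (real k + 1)\<^sup>2"
    using energy_finite_imp_L2sq_quadratic_bound[OF assms(2)] by blast
  have "\<bar>?D k y\<bar> \<le> (R + 1 + B) * (real k + 1)\<^sup>2" for k y
  proof -
    have "1 \<le> (real k + 1)\<^sup>2" using one_le_power[of "real k + 1" 2] by simp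
    then have "R + 1 \<le> (R + 1) * (real k + 1)\<^sup>2"
      using \<open>R \<ge> 0\<close> mult_left_mono[of 1 "(real k + 1)\<^sup>2" "R + 1"] by simp
    moreover have "\<bar>?D k y\<bar> \<le> R + 1 + L2sq (?D (Suc k)) / 2"
      by (rule abs_le_L2sq_derivative[OF \<open>R \<ge> 0\<close> deriv cont vanish_D vanish_D])
    moreover have "0 \<le> B * (real k + 1)\<^sup>2" using \<open>B \<ge> 0\<close> by simp
    moreover have "(R + 1 + B) * (real k + 1)\<^sup>2 = (R + 1) * (real k + 1)\<^sup>2 + B * (real k + 1)\<^sup>2"
      by (simp add: algebra_simps)
    ultimately show ?thesis using B[of k] by linarith
  qed
  moreover have "?D k (R + 1) = 0" for k
    using \<open>R \<ge> 0\<close> by (intro vanish_D) arith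
  ultimately have "?D 0 x = 0"
    by (rule zero_if_derivatives_quadratically_bounded_and_flat_at[of ?D, OF deriv])
  then show "\<phi> x = 0" by simp
qed

lemma higher_deriv_zero: "(deriv ^^ k) (\<lambda>_::real. 0::real) = (\<lambda>_. 0)"
  by (induction k) auto

theorem theorem5p3:
  shows "(\<forall>\<phi>. test_fun UNIV \<phi> \<and> energy_finite \<phi> \<longrightarrow> \<phi> = (\<lambda>_. 0))
       \<and> (\<forall>\<Omega>::real set. open \<Omega> \<longrightarrow> Xpre \<Omega> = {\<lambda>_. 0})"
proof (intro conjI allI impI)
  fix \<phi> :: "real \<Rightarrow> real"
  assume "test_fun UNIV \<phi> \<and> energy_finite \<phi>"
  then show "\<phi> = (\<lambda>_. 0)" using test_fun_energy_finite_eq_zero by blast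
next
  fix \<Omega> :: "real set"
  have "test_fun \<Omega> (\<lambda>_. 0)" "energy_finite (\<lambda>_. 0)"
    by (simp_all add: test_fun_def energy_finite_def L2sq_def higher_deriv_zero)
  then show "Xpre \<Omega> = {\<lambda>_. 0}"
    unfolding Xpre_def using test_fun_energy_finite_eq_zero by blast
qed

end
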